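(* Consider contextual bilateral trade: the seller has an unknown vector $\theta^s\in\mathbb B_d$, the buyer an unknown vector $\theta^b\in\mathbb B_d$, and in round $t$ a context $x_t\in\mathbb B_d$ (chosen adversarially, revealed before pricing) determines cost $c_t=\langle\theta^s,x_t\rangle$ and value $v_t=\langle\theta^b,x_t\rangle$. Run the following algorithm (Multi-Scale Steiner GFT Maximization). Let $\Phi_1=\mathbb B_d$ and $\delta_\ell=2^{-\ell}/(8d)$. In round $t$, let $\ell_t$ be the largest integer with $w_{\Phi_t}(x_t)\le 2^{-\ell_t}$ (if the width is $0$, post an arbitrary price), and post the single price $y_t$ defined by $\mathrm{vol}(\{\theta\in\Phi_t+\delta_{\ell_t}\mathbb B_d:\langle\theta,x_t\rangle\ge y_t\})=\frac12\mathrm{vol}(\Phi_t+\delta_{\ell_t}\mathbb B_d)$. If the seller accepts and the buyer rejects, set $\Phi_{t+1}=\{\theta\in\Phi_t:\langle\theta,x_t\rangle\le y_t\}$; if the seller rejects and the buyer accepts, set $\Phi_{t+1}=\{\theta\in\Phi_t:\langle\theta,x_t\rangle\ge y_t\}$; otherwise $\Phi_{t+1}=\Phi_t$. Then the cumulative gains-from-trade regret is $O(d\log d)$, independent of $T$ and of the context sequence.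
   Context: $\mathbb B_d$ is the closed unit Euclidean ball in $\mathbb R^d$; $A+rB_d$ denotes Minkowski sum; $\mathrm{vol}$ is $d$-dimensional volume. The width of a convex set $K$ in direction $x$ is $w_K(x)=\max_{\theta_1,\theta_2\in K}\langle\theta_1-\theta_2,x\rangle$. The seller accepts price $y$ iff $y\ge c_t$, the buyer iff $y\le v_t$; a trade in round $t$ yields GFT $v_t-c_t$, else $0$. Round-$t$ regret is $\max\{v_t-c_t,0\}$ minus the realized GFT; cumulative regret is the sum over rounds. *)

theory Defs
  imports "HOL-Analysis.Analysis" "HOL-Probability.Probability"
begin

text \<open>Vectors of R^d are represented as functions nat => real vanishing outside {..<d},
  so that the dimension d is an ordinary natural number (needed because the regret
  bound O(d log d) has a constant uniform in d).\<close>

definition rvec :: "nat \<Rightarrow> (nat \<Rightarrow> real) set" where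
  "rvec d = {\<theta>. \<forall>i\<ge>d. \<theta> i = 0}"

definition ip :: "nat \<Rightarrow> (nat \<Rightarrow> real) \<Rightarrow> (nat \<Rightarrow> real) \<Rightarrow> real" where
  "ip d a b = (\<Sum>i<d. a i * b i)"

definition rball :: "nat \<Rightarrow> real \<Rightarrow> (nat \<Rightarrow> real) set" where
  "rball d r = {\<theta>\<in>rvec d. sqrt (\<Sum>i<d. (\<theta> i)\<^sup>2) \<le> r}"

definition mink :: "nat \<Rightarrow> (nat \<Rightarrow> real) set \<Rightarrow> real \<Rightarrow> (nat \<Rightarrow> real) set" where
  "mink d A r = {(\<lambda>i. a i + b i) | a b. a \<in> A \<and> b \<in> rball d r}"

definition vol :: "nat \<Rightarrow> (nat \<Rightarrow> real) set \<Rightarrow> real" where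
  "vol d S = measure (Pi\<^sub>M {..<d} (\<lambda>_. lborel))
      {f \<in> space (Pi\<^sub>M {..<d} (\<lambda>_. lborel)). (\<lambda>i. if i < d then f i else 0) \<in> S}"

definition width :: "nat \<Rightarrow> (nat \<Rightarrow> real) set \<Rightarrow> (nat \<Rightarrow> real) \<Rightarrow> real" where
  "width d K x = Sup {ip d (\<lambda>i. a i - b i) x | a b. a \<in> K \<and> b \<in> K}"

definition scale :: "real \<Rightarrow> int" where
  "scale w = (GREATEST l::int. w \<le> 2 powr (- real_of_int l))"

definition delta :: "nat \<Rightarrow> int \<Rightarrow> real" where
  "delta d l = 2 powr (- real_of_int l) / (8 * real d)"

text \<open>Knowledge sets Phi_t (rounds indexed from 0), driven by contexts x, posted prices y,
  and the hidden seller/buyer vectors.\<close>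
primrec knowledge :: "nat \<Rightarrow> (nat \<Rightarrow> real) \<Rightarrow> (nat \<Rightarrow> real) \<Rightarrow> (nat \<Rightarrow> nat \<Rightarrow> real)
    \<Rightarrow> (nat \<Rightarrow> real) \<Rightarrow> nat \<Rightarrow> (nat \<Rightarrow> real) set" where
  "knowledge d ths thb x y 0 = rball d 1"
| "knowledge d ths thb x y (Suc t) =
     (let P = knowledge d ths thb x y t; c = ip d ths (x t); v = ip d thb (x t) in
      if c \<le> y t \<and> \<not> (y t \<le> v) then {\<theta>\<in>P. ip d \<theta> (x t) \<le> y t}
      else if \<not> (c \<le> y t) \<and> y t \<le> v then {\<theta>\<in>P. ip d \<theta> (x t) \<ge> y t}
      else P)"

definition steiner_prices :: "nat \<Rightarrow> (nat \<Rightarrow> real) \<Rightarrow> (nat \<Rightarrow> real) \<Rightarrow> (nat \<Rightarrow> nat \<Rightarrow> real)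
    \<Rightarrow> (nat \<Rightarrow> real) \<Rightarrow> bool" where
  "steiner_prices d ths thb x y \<longleftrightarrow>
     (\<forall>t. let P = knowledge d ths thb x y t; w = width d P (x t);
             E = mink d P (delta d (scale w)) in
          w \<noteq> 0 \<longrightarrow> vol d {\<theta>\<in>E. ip d \<theta> (x t) \<ge> y t} = vol d E / 2)"

definition round_regret :: "real \<Rightarrow> real \<Rightarrow> real \<Rightarrow> real" where
  "round_regret c v y = max (v - c) 0 - (if c \<le> y \<and> y \<le> v then v - c else 0)"

definition cum_regret :: "nat \<Rightarrow> (nat \<Rightarrow> real) \<Rightarrow> (nat \<Rightarrow> real) \<Rightarrow> (nat \<Rightarrow> nat \<Rightarrow> real)
    \<Rightarrow> (nat \<Rightarrow> real) \<Rightarrow> nat \<Rightarrow> real" where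
  "cum_regret d ths thb x y T = (\<Sum>t<T. round_regret (ip d ths (x t)) (ip d thb (x t)) (y t))"

end

(*
  For each scale k let V_k(t) be the volume of the Steiner expansion of the knowledge set
  Phi_t by rho_k = 2^-k / (4d). It never increases. In a round where exactly one side accepts
  (the only rounds with regret), the price cuts Phi_t, and if the width w of Phi_t in direction
  x_t lies in (2^-k, 2^(1-k)] the price halves the expansion at exactly this scale. Phi_t then
  contains two points 4 d rho_k apart in direction x_t, so every slab of width rho_k holds at
  most a third of the volume of the convex expansion; hence the expansion of the kept half has
  volume at most 5/6 V_k(t). The slab bound comes from packing homothetic copies of the slab,
  shrunk towards a far point of the body, into the body. As (2 rho_k / d)^d <= V_k(t) <=
  (2 (1 + rho_k))^d, scale k sees O(d (log d + k)) such rounds, each costing at most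
  w <= 2^(1-k); summing over k gives O(d log d).
*)

theory Submission
  imports Defs
begin

section \<open>Volume in R^d\<close>

abbreviation lborel_Pi :: "nat \<Rightarrow> (nat \<Rightarrow> real) measure" where
  "lborel_Pi d \<equiv> Pi\<^sub>M {..<d} (\<lambda>_. lborel)"

interpretation lborel_product: product_sigma_finite "\<lambda>_::nat. lborel::real measure"
  by standard

definition zero_ext :: "nat \<Rightarrow> (nat \<Rightarrow> real) \<Rightarrow> (nat \<Rightarrow> real)" where
  "zero_ext d f = (\<lambda>i. if i < d then f i else 0)"

definition coord_set :: "nat \<Rightarrow> (nat \<Rightarrow> real) set \<Rightarrow> (nat \<Rightarrow> real) set" where
  "coord_set d S = {f \<in> space (lborel_Pi d). zero_ext d f \<in> S}"

definition cube :: "nat \<Rightarrow> (nat \<Rightarrow> real) \<Rightarrow> real \<Rightarrow> (nat \<Rightarrow> real) set" where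
  "cube d c r = {\<theta>\<in>rvec d. \<forall>i<d. \<bar>\<theta> i - c i\<bar> \<le> r}"

lemma vol_eq_measure_coord_set: "vol d S = measure (lborel_Pi d) (coord_set d S)"
  by (simp add: vol_def coord_set_def zero_ext_def)

lemma vol_nonneg: "0 \<le> vol d S"
  by (simp add: vol_eq_measure_coord_set)

lemma zero_ext_measurable: "zero_ext d \<in> borel_measurable (lborel_Pi d)"
proof (rule measurable_coordinatewise_then_product)
  fix i
  show "(\<lambda>f. zero_ext d f i) \<in> borel_measurable (lborel_Pi d)"
    by (cases "i < d") (simp_all add: zero_ext_def)
qed

lemma sets_coord_set: "S \<in> sets borel \<Longrightarrow> coord_set d S \<in> sets (lborel_Pi d)"
  using measurable_sets[OF zero_ext_measurable]
  by (simp add: coord_set_def vimage_def Int_def conj_commute)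

lemma coord_set_mono: "S \<subseteq> T \<Longrightarrow> coord_set d S \<subseteq> coord_set d T"
  unfolding coord_set_def by auto

lemma coord_set_Un: "coord_set d (A \<union> B) = coord_set d A \<union> coord_set d B"
  unfolding coord_set_def by auto

lemma coord_set_cube: "coord_set d (cube d c r) = Pi\<^sub>E {..<d} (\<lambda>i. {c i - r .. c i + r})"
proof (intro set_eqI iffI)
  fix f assume "f \<in> coord_set d (cube d c r)"
  then show "f \<in> Pi\<^sub>E {..<d} (\<lambda>i. {c i - r .. c i + r})"
    unfolding coord_set_def cube_def zero_ext_def by (auto simp: space_PiM PiE_iff abs_le_iff)
next
  fix f assume f: "f \<in> Pi\<^sub>E {..<d} (\<lambda>i. {c i - r .. c i + r})"
  then have "\<forall>i<d. \<bar>zero_ext d f i - c i\<bar> \<le> r"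
    by (auto simp: zero_ext_def PiE_iff abs_diff_le_iff)
  moreover have "zero_ext d f \<in> rvec d" "f \<in> space (lborel_Pi d)"
    using f by (auto simp: rvec_def zero_ext_def space_PiM PiE_iff)
  ultimately show "f \<in> coord_set d (cube d c r)" unfolding coord_set_def cube_def by simp
qed

lemma emeasure_cube: "r \<ge> 0 \<Longrightarrow> emeasure (lborel_Pi d) (coord_set d (cube d c r)) = ennreal ((2*r)^d)"
  by (simp add: coord_set_cube lborel_product.emeasure_PiM ennreal_power)

lemma vol_cube: "r \<ge> 0 \<Longrightarrow> vol d (cube d c r) = (2*r)^d"
  by (simp add: vol_eq_measure_coord_set measure_def emeasure_cube)

lemma cube_fmeasurable: "r \<ge> 0 \<Longrightarrow> coord_set d (cube d c r) \<in> fmeasurable (lborel_Pi d)"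
proof (rule fmeasurableI)
  show "coord_set d (cube d c r) \<in> sets (lborel_Pi d)"
    unfolding coord_set_cube by (rule sets_PiM_I_finite) auto
qed (simp add: emeasure_cube)

lemma rball_subset_cube: "rball d r \<subseteq> cube d (\<lambda>_. 0) r"
proof
  fix \<theta> assume \<theta>: "\<theta> \<in> rball d r"
  have "\<bar>\<theta> i\<bar> \<le> r" if "i < d" for i
  proof -
    have "\<bar>\<theta> i\<bar> = sqrt ((\<theta> i)\<^sup>2)" by simp
    also have "\<dots> \<le> sqrt (\<Sum>j<d. (\<theta> j)\<^sup>2)"
      using that by (intro real_sqrt_le_mono member_le_sum) auto
    also have "\<dots> \<le> r" using \<theta> unfolding rball_def by simp
    finally show ?thesis .
  qed
  then show "\<theta> \<in> cube d (\<lambda>_. 0) r" using \<theta> unfolding cube_def rball_def by simp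
qed

lemma rball_empty:
  assumes "r < 0"
  shows "rball d r = {}"
proof (rule equals0I)
  fix \<theta> assume "\<theta> \<in> rball d r"
  then have "sqrt (\<Sum>i<d. (\<theta> i)\<^sup>2) \<le> r" unfolding rball_def by simp
  moreover have "0 \<le> sqrt (\<Sum>i<d. (\<theta> i)\<^sup>2)" by (simp add: sum_nonneg)
  ultimately show False using assms by linarith
qed

lemma coord_set_fmeasurable:
  assumes "S \<in> sets borel" "S \<subseteq> rball d R"
  shows "coord_set d S \<in> fmeasurable (lborel_Pi d)"
proof (cases "R \<ge> 0")
  case True
  with assms show ?thesis
    by (intro fmeasurableI2[OF cube_fmeasurable[of R d "\<lambda>_. 0"] _ sets_coord_set] coord_set_mono
        order_trans[OF _ rball_subset_cube])
next
  case False
  with assms show ?thesis by (simp add: rball_empty coord_set_def)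
qed

lemma vol_mono:
  assumes "S \<subseteq> T" "S \<in> sets borel" "T \<in> sets borel" "T \<subseteq> rball d R"
  shows "vol d S \<le> vol d T"
  unfolding vol_eq_measure_coord_set
  using assms by (intro measure_mono_fmeasurable coord_set_mono sets_coord_set coord_set_fmeasurable)

lemma vol_disjoint_Un:
  assumes "A \<in> sets borel" "B \<in> sets borel" "A \<inter> B = {}" "A \<union> B \<subseteq> rball d R"
  shows "vol d (A \<union> B) = vol d A + vol d B"
  unfolding vol_eq_measure_coord_set coord_set_Un
proof (rule measure_Union)
  show "emeasure (lborel_Pi d) (coord_set d A) \<noteq> \<infinity>" "emeasure (lborel_Pi d) (coord_set d B) \<noteq> \<infinity>"
    using assms coord_set_fmeasurable[of _ d R] by (auto simp: fmeasurable_def less_top)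
  show "coord_set d A \<in> sets (lborel_Pi d)" "coord_set d B \<in> sets (lborel_Pi d)"
    using assms by (auto intro: sets_coord_set)
  show "coord_set d A \<inter> coord_set d B = {}" using assms(3) unfolding coord_set_def by auto
qed

lemma vol_Un_le: "A \<in> sets borel \<Longrightarrow> B \<in> sets borel \<Longrightarrow> vol d (A \<union> B) \<le> vol d A + vol d B"
  unfolding vol_eq_measure_coord_set coord_set_Un by (intro measure_Un_le sets_coord_set)

lemma vol_le_cube:
  assumes "S \<in> sets borel" "S \<subseteq> cube d c r" "r \<ge> 0"
  shows "vol d S \<le> (2*r)^d"
  using assms vol_cube[of r d c] unfolding vol_eq_measure_coord_set
  by (metis measure_mono_fmeasurable coord_set_mono sets_coord_set cube_fmeasurable)

lemma vol_le_geometric_packing: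
  fixes q a :: real
  assumes A: "\<And>k. A k \<in> sets borel" "\<And>k. A k \<subseteq> U" "disjoint_family A"
    and U: "U \<in> sets borel" "U \<subseteq> rball d R"
    and vol_A: "\<And>k. vol d (A k) = q^k * a" and q: "0 \<le> q" "q < 1"
  shows "a \<le> (1 - q) * vol d U"
proof -
  have fin: "coord_set d (A k) \<in> fmeasurable (lborel_Pi d)" for k
    using A U by (intro coord_set_fmeasurable[of _ d R]) auto
  have "disjoint_family (\<lambda>k. coord_set d (A k))"
    using A(3) unfolding disjoint_family_on_def coord_set_def by blast
  then have disj: "disjoint_family_on (\<lambda>k. coord_set d (A k)) {..<N}" for N
    by (rule disjoint_family_on_mono[rotated]) simp
  have partial: "(\<Sum>k<N. q^k * a) \<le> vol d U" for N
  proof -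
    have "(\<Sum>k<N. q^k * a) = measure (lborel_Pi d) (\<Union>k<N. coord_set d (A k))"
      unfolding vol_A[symmetric] vol_eq_measure_coord_set using fin disj
      by (intro measure_finite_Union[symmetric]) (auto simp: fmeasurable_def less_top)
    also have "\<dots> \<le> measure (lborel_Pi d) (coord_set d U)"
    proof (rule measure_mono_fmeasurable)
      show "(\<Union>k<N. coord_set d (A k)) \<subseteq> coord_set d U"
        using A(2) coord_set_mono by blast
    qed (use A U fin in \<open>auto intro: coord_set_fmeasurable\<close>)
    finally show ?thesis unfolding vol_eq_measure_coord_set .
  qed
  have "(\<lambda>k. q^k * a) sums (1 / (1 - q) * a)"
    using geometric_sums[of q] q by (intro sums_mult2) auto
  then have "1 / (1 - q) * a \<le> vol d U"
    using partial by (metis sums_unique sums_summable suminf_le_const)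
  then show ?thesis using q by (simp add: field_simps)
qed

lemma emeasure_lborel_affine:
  fixes c t :: real
  assumes "c \<noteq> 0" "A \<in> sets lborel"
  shows "emeasure lborel A = ennreal \<bar>c\<bar> * emeasure lborel {x. t + c * x \<in> A}"
proof -
  have "emeasure lborel A = emeasure (density (distr lborel borel (\<lambda>x. t + c * x)) (\<lambda>_. ennreal \<bar>c\<bar>)) A"
    using lborel_real_affine[OF assms(1), of t] by simp
  also have "\<dots> = ennreal \<bar>c\<bar> * emeasure lborel ((\<lambda>x. t + c * x) -` A \<inter> space lborel)"
    using assms(2) by (simp add: emeasure_density_const emeasure_distr)
  finally show ?thesis by (simp add: vimage_def)
qed

lemma emeasure_PiM_affine:
  fixes c :: real and I :: "nat set"
  assumes c: "c \<noteq> 0" and I: "finite I" and E: "E \<in> sets (Pi\<^sub>M I (\<lambda>_. lborel))"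
  shows "emeasure (Pi\<^sub>M I (\<lambda>_. lborel)) E = ennreal (\<bar>c\<bar> ^ card I) *
    emeasure (Pi\<^sub>M I (\<lambda>_. lborel)) {f \<in> space (Pi\<^sub>M I (\<lambda>_. lborel)). (\<lambda>i\<in>I. c * f i + q i) \<in> E}"
proof -
  let ?M = "Pi\<^sub>M I (\<lambda>_. lborel :: real measure)"
  define g where "g = (\<lambda>f. \<lambda>i\<in>I. c * f i + q i)"
  have g: "g \<in> measurable ?M ?M"
    unfolding g_def by (rule measurable_restrict) measurable
  have "density (distr ?M ?M g) (\<lambda>_. ennreal (\<bar>c\<bar> ^ card I)) = ?M"
  proof (rule lborel_product.PiM_eqI[OF I])
    fix A :: "nat \<Rightarrow> real set" assume A: "\<And>i. i \<in> I \<Longrightarrow> A i \<in> sets lborel"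
    have A': "{x. q i + c * x \<in> A i} \<in> sets lborel" if "i \<in> I" for i
      using measurable_sets[of "\<lambda>x. q i + c * x" lborel lborel "A i"] A[OF that]
      by (simp add: vimage_def)
    have "g -` Pi\<^sub>E I A \<inter> space ?M = Pi\<^sub>E I (\<lambda>i. {x. q i + c * x \<in> A i})"
      by (auto simp: g_def space_PiM PiE_iff add.commute)
    then have "emeasure (density (distr ?M ?M g) (\<lambda>_. ennreal (\<bar>c\<bar> ^ card I))) (Pi\<^sub>E I A) =
        ennreal (\<bar>c\<bar> ^ card I) * (\<Prod>i\<in>I. emeasure lborel {x. q i + c * x \<in> A i})"
      using A A' g I by (simp add: emeasure_density_const emeasure_distr sets_PiM_I_finite
          lborel_product.emeasure_PiM)
    also have "\<dots> = (\<Prod>i\<in>I. ennreal \<bar>c\<bar> * emeasure lborel {x. q i + c * x \<in> A i})"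
      by (simp add: prod.distrib ennreal_power)
    also have "\<dots> = (\<Prod>i\<in>I. emeasure lborel (A i))"
      using A emeasure_lborel_affine[OF c] by (intro prod.cong) auto
    finally show "emeasure (density (distr ?M ?M g) (\<lambda>_. ennreal (\<bar>c\<bar> ^ card I))) (Pi\<^sub>E I A) =
        (\<Prod>i\<in>I. emeasure lborel (A i))" .
  qed simp
  then have "emeasure ?M E = emeasure (density (distr ?M ?M g) (\<lambda>_. ennreal (\<bar>c\<bar> ^ card I))) E"
    by simp
  also have "\<dots> = ennreal (\<bar>c\<bar> ^ card I) * emeasure ?M (g -` E \<inter> space ?M)"
    using E g by (simp add: emeasure_density_const emeasure_distr)
  finally show ?thesis by (simp add: g_def vimage_def Int_def conj_commute)
qed

lemma ip_add: "ip d (\<lambda>i. a i + b i) x = ip d a x + ip d b x"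
  unfolding ip_def by (simp add: algebra_simps sum.distrib)

lemma ip_diff: "ip d (\<lambda>i. a i - b i) x = ip d a x - ip d b x"
  unfolding ip_def by (simp add: algebra_simps sum_subtractf)

lemma ip_minus_right: "ip d a (\<lambda>i. - x i) = - ip d a x"
  unfolding ip_def by (simp add: sum_negf)

lemma rball_L2: "rball d r = {\<theta>\<in>rvec d. L2_set \<theta> {..<d} \<le> r}"
  by (simp add: rball_def L2_set_def)

lemma abs_ip_le: "\<bar>ip d a b\<bar> \<le> L2_set a {..<d} * L2_set b {..<d}"
proof -
  have "\<bar>ip d a b\<bar> \<le> (\<Sum>i<d. \<bar>a i * b i\<bar>)" unfolding ip_def by (rule sum_abs)
  also have "\<dots> = (\<Sum>i<d. \<bar>a i\<bar> * \<bar>b i\<bar>)" by (simp add: abs_mult)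
  also have "\<dots> \<le> L2_set a {..<d} * L2_set b {..<d}" by (rule L2_set_mult_ineq)
  finally show ?thesis .
qed

lemma ip_le_radius: "b \<in> rball d r \<Longrightarrow> x \<in> rball d 1 \<Longrightarrow> ip d b x \<le> r"
proof -
  assume "b \<in> rball d r" "x \<in> rball d 1"
  then have "L2_set b {..<d} * L2_set x {..<d} \<le> r * 1"
    unfolding rball_L2 by (intro mult_mono) (auto intro: order_trans[OF L2_set_nonneg])
  then show ?thesis using abs_ip_le[of d b x] by linarith
qed

lemma ip_diff_le_2:
  assumes "a \<in> rball d 1" "b \<in> rball d 1" "x \<in> rball d 1"
  shows "ip d a x - ip d b x \<le> 2"
proof -
  have "L2_set (\<lambda>i. a i + - b i) {..<d} \<le> L2_set a {..<d} + L2_set (\<lambda>i. - b i) {..<d}"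
    by (rule L2_set_triangle_ineq)
  also have "\<dots> = L2_set a {..<d} + L2_set b {..<d}"
    by (simp add: L2_set_def)
  also have "\<dots> \<le> 2"
    using assms(1,2) unfolding rball_L2 by simp
  finally have "(\<lambda>i. a i - b i) \<in> rball d 2"
    using assms unfolding rball_L2 rvec_def by simp
  from ip_le_radius[OF this assms(3)] show ?thesis unfolding ip_diff .
qed

lemma continuous_on_coordinate [continuous_intros]: "continuous_on S (\<lambda>\<theta>::nat\<Rightarrow>real. \<theta> i)"
  by (rule continuous_on_subset[OF continuous_on_product_coordinates]) simp

lemma continuous_on_ip [continuous_intros]: "continuous_on S (\<lambda>\<theta>. ip d \<theta> x)"
  unfolding ip_def by (intro continuous_intros)

lemma closed_rvec: "closed (rvec d)"
proof -
  have "rvec d = (\<Inter>i\<in>{d..}. {\<theta>. \<theta> i = 0})" unfolding rvec_def by auto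
  moreover have "closed {\<theta>::nat\<Rightarrow>real. \<theta> i = 0}" for i
    by (intro closed_Collect_eq continuous_intros)
  ultimately show ?thesis by auto
qed

lemma closed_rball: "closed (rball d r)"
proof -
  have "rball d r = rvec d \<inter> {\<theta>. sqrt (\<Sum>i<d. (\<theta> i)\<^sup>2) \<le> r}" unfolding rball_def by auto
  moreover have "closed {\<theta>::nat\<Rightarrow>real. sqrt (\<Sum>i<d. (\<theta> i)\<^sup>2) \<le> r}"
    by (intro closed_Collect_le continuous_intros)
  ultimately show ?thesis using closed_rvec by auto
qed

lemma closed_cube: "closed (cube d c r)"
proof -
  have "cube d c r = rvec d \<inter> (\<Inter>i<d. {\<theta>. \<bar>\<theta> i - c i\<bar> \<le> r})" unfolding cube_def by auto
  moreover have "closed {\<theta>::nat\<Rightarrow>real. \<bar>\<theta> i - c i\<bar> \<le> r}" for i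
    by (intro closed_Collect_le continuous_intros)
  ultimately show ?thesis using closed_rvec by (simp add: closed_Int closed_INT)
qed

lemma compact_rball: "compact (rball d r)"
proof -
  define B where "B = Pi\<^sub>E UNIV (\<lambda>i::nat. if i < d then {-\<bar>r\<bar>..\<bar>r\<bar>} else {0::real})"
  have "compactin (product_topology (\<lambda>_. euclidean) UNIV) B"
    unfolding B_def compactin_PiE by auto
  then have "compact B" by (simp add: euclidean_product_topology)
  moreover have "rball d r \<subseteq> B"
  proof
    fix \<theta> assume "\<theta> \<in> rball d r"
    then have "\<theta> \<in> cube d (\<lambda>_. 0) r" "\<theta> \<in> rvec d" using rball_subset_cube rball_def by auto
    then show "\<theta> \<in> B" unfolding B_def cube_def rvec_def by (auto simp: PiE_iff abs_le_iff)
  qed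
  ultimately show ?thesis using closed_rball by (metis compact_Int_closed inf.absorb_iff2)
qed

lemma closed_halfspace_le: "closed S \<Longrightarrow> closed {\<theta>\<in>S. ip d \<theta> x \<le> y}"
  by (simp add: Collect_conj_eq closed_Int closed_Collect_le continuous_intros)

lemma closed_halfspace_ge: "closed S \<Longrightarrow> closed {\<theta>\<in>S. y \<le> ip d \<theta> x}"
  by (simp add: Collect_conj_eq closed_Int closed_Collect_le continuous_intros)

lemma borel_halfspace_less: "closed S \<Longrightarrow> {\<theta>\<in>S. ip d \<theta> x < y} \<in> sets borel"
  by (simp add: Collect_conj_eq sets.Int borel_closed borel_open open_Collect_less continuous_intros)

definition homothety :: "(nat \<Rightarrow> real) \<Rightarrow> real \<Rightarrow> (nat \<Rightarrow> real) \<Rightarrow> (nat \<Rightarrow> real)" where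
  "homothety p l \<theta> = (\<lambda>i. p i + l * (\<theta> i - p i))"

lemma ip_homothety: "ip d (homothety p l \<theta>) x = ip d p x + l * (ip d \<theta> x - ip d p x)"
  unfolding ip_def homothety_def by (simp add: algebra_simps sum.distrib sum_subtractf sum_distrib_left)

lemma homothety_inverse: "l \<noteq> 0 \<Longrightarrow> homothety p l (homothety p (1/l) \<theta>) = \<theta>"
  unfolding homothety_def by (auto simp: field_simps)

lemma borel_homothety_preimage:
  assumes "A \<in> sets borel"
  shows "{\<theta>\<in>rvec d. homothety p l \<theta> \<in> A} \<in> sets borel"
proof -
  have "continuous_on UNIV (homothety p l)"
    unfolding homothety_def by (intro continuous_intros)
  then have "homothety p l -` A \<inter> space borel \<in> sets borel"
    using assms by (intro measurable_sets[OF borel_measurable_continuous_onI])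
  moreover have "{\<theta>\<in>rvec d. homothety p l \<theta> \<in> A} = rvec d \<inter> (homothety p l -` A \<inter> space borel)"
    by auto
  ultimately show ?thesis using closed_rvec by simp
qed

lemma vol_homothety_preimage:
  assumes p: "p \<in> rvec d" and l: "l > 0" and A: "A \<in> sets borel"
  shows "vol d {\<theta>\<in>rvec d. homothety p (1/l) \<theta> \<in> A} = l^d * vol d A"
proof -
  let ?B = "{\<theta>\<in>rvec d. homothety p (1/l) \<theta> \<in> A}"
  define g where "g = (\<lambda>f. \<lambda>i\<in>{..<d}. (1/l) * f i + (p i - p i / l))"
  have "zero_ext d (g f) = homothety p (1/l) (zero_ext d f)" for f
    using p l by (auto simp: zero_ext_def g_def homothety_def rvec_def field_simps)
  moreover have "g f \<in> space (lborel_Pi d)" "zero_ext d f \<in> rvec d" for f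
    by (simp_all add: g_def space_PiM zero_ext_def rvec_def)
  ultimately have B: "coord_set d ?B = {f \<in> space (lborel_Pi d). g f \<in> coord_set d A}"
    unfolding coord_set_def by auto
  have "emeasure (lborel_Pi d) (coord_set d A) = ennreal ((1/l)^d) * emeasure (lborel_Pi d) (coord_set d ?B)"
    unfolding B g_def using l emeasure_PiM_affine[of "1/l" "{..<d}" "coord_set d A"]
    by (simp add: sets_coord_set A)
  then have "emeasure (lborel_Pi d) (coord_set d ?B) = ennreal (l^d) * emeasure (lborel_Pi d) (coord_set d A)"
    using l by (simp add: ennreal_mult'[symmetric] mult.assoc[symmetric] power_mult_distrib[symmetric])
  then show ?thesis
    unfolding vol_eq_measure_coord_set measure_def using l by (simp add: enn2real_mult)
qed

section \<open>Convex sets and Minkowski sums\<close>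

text \<open>The type \<^typ>\<open>nat \<Rightarrow> real\<close> is no \<^class>\<open>real_vector\<close>, so convexity is phrased
  with homotheties instead of the library's \<^const>\<open>convex\<close>.\<close>

definition rconvex :: "(nat \<Rightarrow> real) set \<Rightarrow> bool" where
  "rconvex S \<longleftrightarrow> (\<forall>a\<in>S. \<forall>b\<in>S. \<forall>l. 0 \<le> l \<longrightarrow> l \<le> 1 \<longrightarrow> homothety a l b \<in> S)"

lemma rconvexD: "rconvex S \<Longrightarrow> a \<in> S \<Longrightarrow> b \<in> S \<Longrightarrow> 0 \<le> l \<Longrightarrow> l \<le> 1 \<Longrightarrow> homothety a l b \<in> S"
  unfolding rconvex_def by blast

lemma homothety_convex_combination: "homothety a l b = (\<lambda>i. (1 - l) * a i + l * b i)"
  unfolding homothety_def by (auto simp: algebra_simps)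

lemma rconvex_rball: "rconvex (rball d r)"
  unfolding rconvex_def
proof (intro ballI allI impI)
  fix a b and l :: real assume ab: "a \<in> rball d r" "b \<in> rball d r" and l: "0 \<le> l" "l \<le> 1"
  have "L2_set (homothety a l b) {..<d} \<le> L2_set (\<lambda>i. (1 - l) * a i) {..<d} + L2_set (\<lambda>i. l * b i) {..<d}"
    unfolding homothety_convex_combination by (rule L2_set_triangle_ineq)
  also have "\<dots> = (1 - l) * L2_set a {..<d} + l * L2_set b {..<d}"
    using l by (simp add: L2_set_right_distrib)
  also have "\<dots> \<le> (1 - l) * r + l * r"
    using ab l unfolding rball_L2 by (intro add_mono mult_left_mono) auto
  finally show "homothety a l b \<in> rball d r"
    using ab unfolding rball_L2 rvec_def homothety_def by (simp add: algebra_simps)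
qed

lemma rconvex_halfspace_le:
  assumes "rconvex S"
  shows "rconvex {\<theta>\<in>S. ip d \<theta> x \<le> y}"
  unfolding rconvex_def
proof (intro ballI allI impI)
  fix a b and l :: real
  assume ab: "a \<in> {\<theta>\<in>S. ip d \<theta> x \<le> y}" "b \<in> {\<theta>\<in>S. ip d \<theta> x \<le> y}" and l: "0 \<le> l" "l \<le> 1"
  have "ip d (homothety a l b) x = (1 - l) * ip d a x + l * ip d b x"
    unfolding ip_homothety by (simp add: algebra_simps)
  also have "\<dots> \<le> (1 - l) * y + l * y"
    using ab l by (intro add_mono mult_left_mono) auto
  finally show "homothety a l b \<in> {\<theta>\<in>S. ip d \<theta> x \<le> y}"
    using rconvexD[OF assms] ab l by (simp add: algebra_simps)
qed

lemma rconvex_halfspace_ge: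
  assumes "rconvex S"
  shows "rconvex {\<theta>\<in>S. y \<le> ip d \<theta> x}"
  using rconvex_halfspace_le[OF assms, of d "\<lambda>i. - x i" "- y"] by (simp add: ip_minus_right)

lemma mink_mono: "A \<subseteq> B \<Longrightarrow> mink d A r \<subseteq> mink d B r"
  unfolding mink_def by blast

lemma minkE:
  assumes "\<theta> \<in> mink d A r"
  obtains a b where "a \<in> A" "b \<in> rball d r" "\<theta> = (\<lambda>i. a i + b i)"
  using assms unfolding mink_def by blast

lemma subset_mink: "r \<ge> 0 \<Longrightarrow> A \<subseteq> mink d A r"
proof
  fix a assume "r \<ge> 0" "a \<in> A"
  moreover from \<open>r \<ge> 0\<close> have "(\<lambda>_. 0) \<in> rball d r" unfolding rball_def rvec_def by simp
  ultimately show "a \<in> mink d A r" unfolding mink_def by force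
qed

lemma mink_subset_rball: "A \<subseteq> rball d R \<Longrightarrow> mink d A r \<subseteq> rball d (R + r)"
proof
  fix \<theta> assume A: "A \<subseteq> rball d R" and "\<theta> \<in> mink d A r"
  from this(2) obtain a b where "a \<in> A" "b \<in> rball d r" and \<theta>: "\<theta> = (\<lambda>i. a i + b i)"
    by (rule minkE)
  with A have ab: "a \<in> rball d R" "b \<in> rball d r" by auto
  have "L2_set \<theta> {..<d} \<le> L2_set a {..<d} + L2_set b {..<d}"
    unfolding \<theta> by (rule L2_set_triangle_ineq)
  also have "\<dots> \<le> R + r" using ab unfolding rball_L2 by simp
  finally show "\<theta> \<in> rball d (R + r)" using ab unfolding \<theta> rball_L2 rvec_def by auto
qed

lemma rconvex_mink: "rconvex A \<Longrightarrow> rconvex (mink d A r)"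
  unfolding rconvex_def
proof (intro ballI allI impI)
  fix u v and l :: real
  assume A: "\<forall>a\<in>A. \<forall>b\<in>A. \<forall>l. 0 \<le> l \<longrightarrow> l \<le> 1 \<longrightarrow> homothety a l b \<in> A"
    and uv: "u \<in> mink d A r" "v \<in> mink d A r" and l: "0 \<le> l" "l \<le> 1"
  obtain a1 b1 where 1: "a1 \<in> A" "b1 \<in> rball d r" "u = (\<lambda>i. a1 i + b1 i)"
    using uv(1) by (rule minkE)
  obtain a2 b2 where 2: "a2 \<in> A" "b2 \<in> rball d r" "v = (\<lambda>i. a2 i + b2 i)"
    using uv(2) by (rule minkE)
  have "homothety a1 l a2 \<in> A" using A 1 2 l by blast
  moreover have "homothety b1 l b2 \<in> rball d r" using rconvexD[OF rconvex_rball] 1 2 l by blast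
  moreover have "homothety u l v = (\<lambda>i. homothety a1 l a2 i + homothety b1 l b2 i)"
    unfolding 1 2 homothety_def by (auto simp: algebra_simps)
  ultimately show "homothety u l v \<in> mink d A r" unfolding mink_def by blast
qed

lemma closed_mink:
  assumes "closed A" "A \<subseteq> rball d R"
  shows "closed (mink d A r)"
proof -
  have "compact A" using assms compact_rball by (metis compact_Int_closed inf.absorb_iff2)
  then have "compact (A \<times> rball d r)" using compact_rball by (rule compact_Times)
  moreover have "continuous_on (A \<times> rball d r) (\<lambda>z. (\<lambda>i. fst z i + snd z i))"
    by (intro continuous_intros continuous_on_compose2[OF continuous_on_coordinate]) auto
  ultimately have "compact ((\<lambda>z. (\<lambda>i. fst z i + snd z i)) ` (A \<times> rball d r))"
    by (rule compact_continuous_image[rotated])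
  moreover have "(\<lambda>z. (\<lambda>i. fst z i + snd z i)) ` (A \<times> rball d r) = mink d A r"
    unfolding mink_def by force
  ultimately show ?thesis by (metis compact_imp_closed)
qed

lemma cube_subset_mink:
  assumes "a \<in> A" "A \<subseteq> rvec d" "r \<ge> 0" "d \<ge> 1"
  shows "cube d a (r / d) \<subseteq> mink d A r"
proof
  fix \<theta> assume \<theta>: "\<theta> \<in> cube d a (r / d)"
  define b where "b = (\<lambda>i. \<theta> i - a i)"
  have "L2_set b {..<d} \<le> (\<Sum>i<d. \<bar>b i\<bar>)" by (rule L2_set_le_sum_abs)
  also have "\<dots> \<le> (\<Sum>i<d. r / d)" using \<theta> unfolding cube_def b_def by (intro sum_mono) auto
  also have "\<dots> = r" using assms(4) by simp
  finally have "b \<in> rball d r"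
    using \<theta> assms(1,2) unfolding rball_L2 b_def cube_def rvec_def by auto
  moreover have "\<theta> = (\<lambda>i. a i + b i)" unfolding b_def by auto
  ultimately show "\<theta> \<in> mink d A r" unfolding mink_def using assms(1) by blast
qed

lemma ip_mink_le:
  assumes "\<theta> \<in> mink d A r" "\<And>a. a \<in> A \<Longrightarrow> ip d a x \<le> y" "x \<in> rball d 1"
  shows "ip d \<theta> x \<le> y + r"
proof -
  obtain a b where ab: "a \<in> A" "b \<in> rball d r" "\<theta> = (\<lambda>i. a i + b i)"
    using assms(1) by (rule minkE)
  show ?thesis
    unfolding ab(3) ip_add using assms(2)[OF ab(1)] ip_le_radius[OF ab(2) assms(3)] by simp
qed

lemma ip_mink_ge:
  assumes "\<theta> \<in> mink d A r" "\<And>a. a \<in> A \<Longrightarrow> y \<le> ip d a x" "x \<in> rball d 1"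
  shows "y - r \<le> ip d \<theta> x"
  using ip_mink_le[OF assms(1), of "\<lambda>i. - x i" "- y"] assms(2,3)
  by (simp add: ip_minus_right rball_def rvec_def)

lemma vol_mink_ge:
  assumes "d \<ge> 1" "p \<in> P" "closed P" "P \<subseteq> rball d 1" "0 \<le> \<rho>"
  shows "(2 * \<rho> / d)^d \<le> vol d (mink d P \<rho>)"
proof -
  have "P \<subseteq> rvec d" using assms(4) unfolding rball_def by auto
  then have "cube d p (\<rho> / d) \<subseteq> mink d P \<rho>" using assms by (intro cube_subset_mink) auto
  then have "vol d (cube d p (\<rho> / d)) \<le> vol d (mink d P \<rho>)"
    using assms mink_subset_rball[of P d 1 \<rho>]
    by (intro vol_mono borel_closed closed_cube closed_mink) auto
  then show ?thesis using assms(5) by (simp add: vol_cube)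
qed

lemma vol_mink_le:
  assumes "closed P" "P \<subseteq> rball d 1" "0 \<le> \<rho>"
  shows "vol d (mink d P \<rho>) \<le> (2 * (1 + \<rho>))^d"
  using assms mink_subset_rball[of P d 1 \<rho>] rball_subset_cube[of d "1 + \<rho>"]
  by (intro vol_le_cube borel_closed closed_mink) auto

lemma vol_mink_mono:
  assumes "P' \<subseteq> P" "closed P'" "closed P" "P \<subseteq> rball d 1"
  shows "vol d (mink d P' \<rho>) \<le> vol d (mink d P \<rho>)"
  using assms mink_subset_rball[of P d 1 \<rho>]
  by (intro vol_mono mink_mono borel_closed closed_mink) auto

section \<open>Thin slabs of convex bodies\<close>

definition slab :: "nat \<Rightarrow> (nat \<Rightarrow> real) set \<Rightarrow> (nat \<Rightarrow> real) \<Rightarrow> real \<Rightarrow> real \<Rightarrow> (nat \<Rightarrow> real) set" where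
  "slab d K x s e = {\<theta>\<in>K. s \<le> ip d \<theta> x \<and> ip d \<theta> x \<le> s + e}"

lemma closed_slab: "closed K \<Longrightarrow> closed (slab d K x s e)"
proof -
  assume "closed K"
  then have "closed {\<theta>\<in>{\<theta>\<in>K. s \<le> ip d \<theta> x}. ip d \<theta> x \<le> s + e}"
    by (intro closed_halfspace_le closed_halfspace_ge)
  moreover have "{\<theta>\<in>{\<theta>\<in>K. s \<le> ip d \<theta> x}. ip d \<theta> x \<le> s + e} = slab d K x s e"
    unfolding slab_def by auto
  ultimately show ?thesis by simp
qed

lemma slab_uminus: "slab d K (\<lambda>i. - x i) (- (s + e)) e = slab d K x s e"
  unfolding slab_def ip_minus_right by auto

lemma vol_split_halfspace:
  assumes "closed K" "K \<subseteq> rball d R"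
  shows "vol d K = vol d {\<theta>\<in>K. y \<le> ip d \<theta> x} + vol d {\<theta>\<in>K. ip d \<theta> x < y}"
proof -
  have "K = {\<theta>\<in>K. y \<le> ip d \<theta> x} \<union> {\<theta>\<in>K. ip d \<theta> x < y}" by auto
  also have "vol d \<dots> = vol d {\<theta>\<in>K. y \<le> ip d \<theta> x} + vol d {\<theta>\<in>K. ip d \<theta> x < y}"
    using assms by (intro vol_disjoint_Un borel_closed closed_halfspace_ge borel_halfspace_less) auto
  finally show ?thesis .
qed

lemma vol_halfspaces_sum:
  assumes "closed K" "K \<subseteq> rball d R" "0 \<le> e"
  shows "vol d {\<theta>\<in>K. s \<le> ip d \<theta> x} + vol d {\<theta>\<in>K. ip d \<theta> x \<le> s + e} = vol d K + vol d (slab d K x s e)"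
proof -
  have "{\<theta>\<in>K. ip d \<theta> x \<le> s + e} = {\<theta>\<in>K. ip d \<theta> x < s} \<union> slab d K x s e"
    using assms(3) unfolding slab_def by auto
  also have "vol d \<dots> = vol d {\<theta>\<in>K. ip d \<theta> x < s} + vol d (slab d K x s e)"
    using assms by (intro vol_disjoint_Un borel_closed closed_slab borel_halfspace_less)
      (auto simp: slab_def)
  finally show ?thesis using vol_split_halfspace[OF assms(1,2), of s x] by simp
qed

lemma homothety_slab_copy:
  assumes K: "rconvex K" and p: "p \<in> K" and l: "0 < l" "l \<le> 1"
    and \<theta>: "homothety p (1/l) \<theta> \<in> slab d K x s e"
  shows "\<theta> \<in> K" "l * (ip d p x - s - e) \<le> ip d p x - ip d \<theta> x" "ip d p x - ip d \<theta> x \<le> l * (ip d p x - s)"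
proof -
  have "homothety p l (homothety p (1/l) \<theta>) \<in> K"
    using \<theta> l unfolding slab_def by (intro rconvexD[OF K p, of "homothety p (1/l) \<theta>" l]) auto
  then show "\<theta> \<in> K" using homothety_inverse[of l p \<theta>] l by simp
  have eq: "ip d p x - ip d \<theta> x = l * (ip d p x - ip d (homothety p (1/l) \<theta>) x)"
    unfolding ip_homothety using l by (simp add: field_simps)
  have "ip d p x - s - e \<le> ip d p x - ip d (homothety p (1/l) \<theta>) x"
    "ip d p x - ip d (homothety p (1/l) \<theta>) x \<le> ip d p x - s"
    using \<theta> unfolding slab_def by auto
  then show "l * (ip d p x - s - e) \<le> ip d p x - ip d \<theta> x" "ip d p x - ip d \<theta> x \<le> l * (ip d p x - s)"
    unfolding eq using l by (simp_all add: mult_left_mono)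
qed

lemma vol_slab_mul_le_far:
  assumes K: "rconvex K" "closed K" "K \<subseteq> rball d R" and d: "d \<ge> 1"
    and p: "p \<in> K" and e: "0 \<le> e" "e < e'" and far: "e' < ip d p x - s"
  shows "vol d (slab d K x s e) * (ip d p x - s) \<le> real d * e' * vol d {\<theta>\<in>K. s \<le> ip d \<theta> x}"
proof -
  define S where "S = slab d K x s e"
  define U where "U = {\<theta>\<in>K. s \<le> ip d \<theta> x}"
  define t where "t = ip d p x - s"
  define r where "r = (t - e') / t"
  have t: "t > 0" and r: "0 < r" "r < 1" and rt: "r * t = t - e'"
    using e far unfolding t_def r_def by (auto simp: field_simps)
  have S: "S \<in> sets borel" and U: "U \<in> sets borel" "U \<subseteq> rball d R"
    using K unfolding S_def U_def by (auto intro: borel_closed closed_slab closed_halfspace_ge)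
  \<comment> \<open>The copies of the slab shrunk towards p by the factors r^k lie in U and are pairwise
    disjoint: the k-th one sits strictly between the levels r^(k+1) t and r^k t below p.\<close>
  define A where "A k = {\<theta>\<in>rvec d. homothety p (1 / r^k) \<theta> \<in> S}" for k
  have copy: "\<theta> \<in> U" "r^(Suc k) * t < ip d p x - ip d \<theta> x" "ip d p x - ip d \<theta> x \<le> r^k * t"
    if "\<theta> \<in> A k" for \<theta> k
  proof -
    have l: "0 < r^k" "r^k \<le> 1" using r by (simp_all add: power_le_one)
    then have "r^k * t \<le> t" "r^(Suc k) * t < r^k * (t - e)"
      using t rt e by (simp_all add: mult_left_le_one_le mult_strict_left_mono)
    with that homothety_slab_copy[OF K(1) p l, of \<theta> d x s e]
    show "\<theta> \<in> U" "r^(Suc k) * t < ip d p x - ip d \<theta> x" "ip d p x - ip d \<theta> x \<le> r^k * t"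
      unfolding A_def S_def U_def t_def by auto
  qed
  then have "A k \<subseteq> U" for k by blast
  moreover have "A j \<inter> A k = {}" if "j < k" for j k
  proof -
    have "r^k * t \<le> r^(Suc j) * t"
      using that r t by (intro mult_right_mono power_decreasing) auto
    then show ?thesis using copy(2)[of _ j] copy(3)[of _ k] by force
  qed
  then have "disjoint_family A"
    unfolding disjoint_family_on_def by (metis Int_commute nat_neq_iff)
  moreover have "A k \<in> sets borel" for k
    unfolding A_def by (rule borel_homothety_preimage[OF S])
  moreover have "vol d (A k) = (r^d)^k * vol d S" for k
    unfolding A_def using vol_homothety_preimage[of p d "r^k", OF _ _ S] p K(3) r
    by (auto simp: rball_def power_mult[symmetric] mult.commute[of k])
  ultimately have "vol d S \<le> (1 - r^d) * vol d U"
    using U r d by (intro vol_le_geometric_packing) (auto simp: power_less_one_iff)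
  also have "\<dots> \<le> real d * (1 - r) * vol d U"
    using Bernoulli_inequality[of "r - 1" d] r vol_nonneg[of d U]
    by (intro mult_right_mono) (auto simp: algebra_simps)
  also have "real d * (1 - r) = real d * e' / t"
    using t unfolding r_def by (simp add: field_simps)
  finally show ?thesis using t unfolding S_def U_def t_def by (simp add: field_simps)
qed

lemma vol_slab_mul_le:
  assumes K: "rconvex K" "closed K" "K \<subseteq> rball d R" and d: "d \<ge> 1"
    and p: "p \<in> K" and e: "0 \<le> e" "e < e'"
  shows "vol d (slab d K x s e) * (ip d p x - s) \<le> real d * e' * vol d {\<theta>\<in>K. s \<le> ip d \<theta> x}"
proof (cases "e' < ip d p x - s")
  case True
  then show ?thesis by (rule vol_slab_mul_le_far[OF K d p e])
next
  case False
  have "slab d K x s e \<subseteq> {\<theta>\<in>K. s \<le> ip d \<theta> x}" unfolding slab_def by auto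
  then have "vol d (slab d K x s e) \<le> vol d {\<theta>\<in>K. s \<le> ip d \<theta> x}"
    using K by (intro vol_mono borel_closed closed_slab closed_halfspace_ge) auto
  have "vol d (slab d K x s e) * (ip d p x - s) \<le> vol d (slab d K x s e) * e'"
    using False vol_nonneg by (intro mult_left_mono) auto
  also have "\<dots> \<le> vol d {\<theta>\<in>K. s \<le> ip d \<theta> x} * e'"
    using \<open>vol d (slab d K x s e) \<le> vol d {\<theta>\<in>K. s \<le> ip d \<theta> x}\<close> e by (intro mult_right_mono) auto
  also have "\<dots> \<le> real d * vol d {\<theta>\<in>K. s \<le> ip d \<theta> x} * e'"
    using d e vol_nonneg[of d "{\<theta>\<in>K. s \<le> ip d \<theta> x}"]
    by (intro mult_right_mono) (auto intro: order_trans[OF _ mult_right_mono[of 1]])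
  finally show ?thesis by (simp add: algebra_simps)
qed

lemma vol_slab_le_third:
  assumes K: "rconvex K" "closed K" "K \<subseteq> rball d R" and d: "d \<ge> 1"
    and pq: "p \<in> K" "q \<in> K" and e: "0 \<le> e" and wide: "4 * real d * e < ip d p x - ip d q x"
  shows "vol d (slab d K x s e) \<le> vol d K / 3"
proof -
  define e' where "e' = (ip d p x - ip d q x) / (4 * real d)"
  have e': "e < e'" "4 * real d * e' = ip d p x - ip d q x"
    using wide d unfolding e'_def by (simp_all add: field_simps)
  \<comment> \<open>Apply the bound from both sides of the slab: from p upwards and from q downwards.\<close>
  have "vol d (slab d K x s e) * (ip d p x - ip d q x + e) =
      vol d (slab d K x s e) * (ip d p x - s) + vol d (slab d K x s e) * (s + e - ip d q x)"
    by (simp add: algebra_simps)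
  also have "\<dots> \<le> real d * e' * vol d {\<theta>\<in>K. s \<le> ip d \<theta> x} + real d * e' * vol d {\<theta>\<in>K. ip d \<theta> x \<le> s + e}"
  proof (rule add_mono)
    show "vol d (slab d K x s e) * (ip d p x - s) \<le> real d * e' * vol d {\<theta>\<in>K. s \<le> ip d \<theta> x}"
      by (rule vol_slab_mul_le[OF K d pq(1) e e'(1)])
    have "{\<theta>\<in>K. - (s + e) \<le> ip d \<theta> (\<lambda>i. - x i)} = {\<theta>\<in>K. ip d \<theta> x \<le> s + e}"
      by (auto simp: ip_minus_right)
    with vol_slab_mul_le[OF K d pq(2) e e'(1), of "\<lambda>i. - x i" "- (s + e)"]
    show "vol d (slab d K x s e) * (s + e - ip d q x) \<le> real d * e' * vol d {\<theta>\<in>K. ip d \<theta> x \<le> s + e}"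
      unfolding slab_uminus by (simp add: ip_minus_right algebra_simps)
  qed
  also have "\<dots> = real d * e' * (vol d K + vol d (slab d K x s e))"
    by (simp only: distrib_left[symmetric] vol_halfspaces_sum[OF K(2,3) e])
  finally have "real d * e' * (3 * vol d (slab d K x s e)) + e * vol d (slab d K x s e) \<le> real d * e' * vol d K"
    unfolding e'(2)[symmetric] by (simp add: algebra_simps)
  moreover have "0 \<le> e * vol d (slab d K x s e)" using e vol_nonneg by simp
  ultimately have "real d * e' * (3 * vol d (slab d K x s e)) \<le> real d * e' * vol d K" by linarith
  moreover have "0 < real d * e'" using d e e' by simp
  ultimately show ?thesis by (simp add: mult_le_cancel_left_pos)
qed

lemma vol_half_union_slab_le:
  assumes K: "rconvex K" "closed K" "K \<subseteq> rball d R" and d: "d \<ge> 1"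
    and ab: "a \<in> K" "b \<in> K" and \<delta>: "0 \<le> \<delta>" and wide: "4 * real d * \<delta> < ip d a x - ip d b x"
    and H: "H \<in> sets borel" "H \<subseteq> K" "vol d H = vol d K / 2"
    and S: "S \<in> sets borel" "S \<subseteq> H \<union> slab d K x s \<delta>"
  shows "vol d S \<le> 5/6 * vol d K"
proof -
  have "vol d S \<le> vol d (H \<union> slab d K x s \<delta>)"
  proof (rule vol_mono[OF S(2) S(1)])
    show "H \<union> slab d K x s \<delta> \<subseteq> rball d R" using H(2) K(3) by (auto simp: slab_def)
  qed (use K(2) H(1) in \<open>auto intro: borel_closed closed_slab\<close>)
  also have "\<dots> \<le> vol d H + vol d (slab d K x s \<delta>)"
    by (rule vol_Un_le[OF H(1) borel_closed[OF closed_slab[OF K(2)]]])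
  also have "\<dots> \<le> vol d K / 2 + vol d K / 3"
    using H(3) vol_slab_le_third[OF K d ab \<delta> wide, of s] by simp
  finally show ?thesis by simp
qed

lemma mink_halfspace_le_subset:
  assumes "x \<in> rball d 1"
  shows "mink d {\<theta>\<in>P. ip d \<theta> x \<le> y} \<delta> \<subseteq> {\<theta>\<in>mink d P \<delta>. ip d \<theta> x < y} \<union> slab d (mink d P \<delta>) x y \<delta>"
  using mink_mono[of "{\<theta>\<in>P. ip d \<theta> x \<le> y}" P d \<delta>] ip_mink_le[OF _ _ assms, of _ _ \<delta> y]
  unfolding slab_def by fastforce

lemma mink_halfspace_ge_subset:
  assumes "x \<in> rball d 1"
  shows "mink d {\<theta>\<in>P. y \<le> ip d \<theta> x} \<delta> \<subseteq> {\<theta>\<in>mink d P \<delta>. y \<le> ip d \<theta> x} \<union> slab d (mink d P \<delta>) x (y - \<delta>) \<delta>"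
  using mink_mono[of "{\<theta>\<in>P. y \<le> ip d \<theta> x}" P d \<delta>] ip_mink_ge[OF _ _ assms, of _ _ \<delta> y]
  unfolding slab_def by fastforce

lemma vol_mink_halfspace_cut:
  assumes d: "d \<ge> 1" and P: "rconvex P" "closed P" "P \<subseteq> rball d 1" and x: "x \<in> rball d 1"
    and \<delta>: "0 \<le> \<delta>" and ab: "a \<in> P" "b \<in> P" and wide: "4 * real d * \<delta> < ip d a x - ip d b x"
    and half: "vol d {\<theta>\<in>mink d P \<delta>. y \<le> ip d \<theta> x} = vol d (mink d P \<delta>) / 2"
    and cut: "P' = {\<theta>\<in>P. ip d \<theta> x \<le> y} \<or> P' = {\<theta>\<in>P. y \<le> ip d \<theta> x}"
  shows "vol d (mink d P' \<delta>) \<le> 5/6 * vol d (mink d P \<delta>)"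
proof -
  define K where "K = mink d P \<delta>"
  have K: "rconvex K" "closed K" "K \<subseteq> rball d (1 + \<delta>)"
    unfolding K_def using P by (auto intro: rconvex_mink closed_mink mink_subset_rball[THEN subsetD])
  have ab': "a \<in> K" "b \<in> K" using ab subset_mink[OF \<delta>, of P d] unfolding K_def by auto
  have "P' \<subseteq> P" using cut by auto
  then have "closed (mink d P' \<delta>)"
    using P cut by (auto intro!: closed_mink closed_halfspace_le closed_halfspace_ge)
  note cut_le = vol_half_union_slab_le[OF K d ab' \<delta> wide _ _ _ borel_closed[OF this]]
  have upper_half: "vol d {\<theta>\<in>K. y \<le> ip d \<theta> x} = vol d K / 2"
    using half unfolding K_def .
  then have lower_half: "vol d {\<theta>\<in>K. ip d \<theta> x < y} = vol d K / 2"
    using vol_split_halfspace[OF K(2,3), of y x] by simp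
  from cut show ?thesis
  proof
    assume "P' = {\<theta>\<in>P. ip d \<theta> x \<le> y}"
    then show ?thesis
      using mink_halfspace_le_subset[OF x, of P y \<delta>] lower_half borel_halfspace_less[OF K(2)]
      unfolding K_def[symmetric] by (intro cut_le[where H = "{\<theta>\<in>K. ip d \<theta> x < y}" and s = y]) auto
  next
    assume "P' = {\<theta>\<in>P. y \<le> ip d \<theta> x}"
    then show ?thesis
      using mink_halfspace_ge_subset[OF x, of P y \<delta>] upper_half borel_closed[OF closed_halfspace_ge[OF K(2)]]
      unfolding K_def[symmetric] by (intro cut_le[where H = "{\<theta>\<in>K. y \<le> ip d \<theta> x}" and s = "y - \<delta>"]) auto
  qed
qed

lemma scale_eq_floor: "w > 0 \<Longrightarrow> scale w = \<lfloor>- log 2 w\<rfloor>"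
  unfolding scale_def
proof (rule Greatest_equality)
  assume w: "w > 0"
  have iff: "w \<le> 2 powr (- real_of_int l) \<longleftrightarrow> real_of_int l \<le> - log 2 w" for l
    using log_le_iff[of 2 w "- real_of_int l"] w by linarith
  show "w \<le> 2 powr (- real_of_int \<lfloor>- log 2 w\<rfloor>)" unfolding iff by simp
  show "l \<le> \<lfloor>- log 2 w\<rfloor>" if "w \<le> 2 powr (- real_of_int l)" for l
    using that unfolding iff by (simp add: le_floor_iff)
qed

lemma scale_index:
  assumes w: "0 < w" "w \<le> 2"
  defines "k \<equiv> nat (scale w + 1)"
  shows "scale w = int k - 1" "(1/2)^k < w" "w \<le> 2 * (1/2)^k"
proof -
  have sc: "scale w = \<lfloor>- log 2 w\<rfloor>" using w(1) by (rule scale_eq_floor)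
  have "- 1 \<le> - log 2 w" using w by simp
  then show k: "scale w = int k - 1" unfolding k_def sc by linarith
  have "- log 2 w < real k" using k unfolding sc by linarith
  then have "(1/2::real)^k < 2 powr (log 2 w)"
    by (simp add: power_one_over powr_realpow[symmetric] powr_minus_divide[symmetric])
  then show "(1/2)^k < w" using w by simp
  have "real k - 1 \<le> - log 2 w" using k unfolding sc by linarith
  then have "2 powr (log 2 w) \<le> 2 powr (1 - real k)" by simp
  then show "w \<le> 2 * (1/2)^k"
    using w by (simp add: powr_diff powr_realpow power_one_over)
qed

lemma delta_index: "delta d (int k - 1) = (1/2)^k / (4 * real d)"
proof -
  have "2 powr (- real_of_int (int k - 1)) = 2 * (1/2::real)^k"
    by (simp add: powr_diff powr_realpow power_one_over)
  then show ?thesis unfolding delta_def by simp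
qed

lemma width_set_le_2:
  assumes "P \<subseteq> rball d 1" "x \<in> rball d 1"
  shows "\<forall>u\<in>{ip d (\<lambda>i. a i - b i) x | a b. a \<in> P \<and> b \<in> P}. u \<le> 2"
  using assms ip_diff_le_2[of _ d _ x] by (auto simp: ip_diff)

lemma width_ge:
  assumes "P \<subseteq> rball d 1" "x \<in> rball d 1" "a \<in> P" "b \<in> P"
  shows "ip d a x - ip d b x \<le> width d P x"
  unfolding width_def ip_diff[symmetric]
  using assms width_set_le_2[OF assms(1,2)] by (intro cSup_upper bdd_aboveI[of _ 2]) auto

lemma width_le_2:
  assumes "P \<subseteq> rball d 1" "x \<in> rball d 1" "P \<noteq> {}"
  shows "width d P x \<le> 2"
proof -
  have "{ip d (\<lambda>i. a i - b i) x | a b. a \<in> P \<and> b \<in> P} \<noteq> {}" using assms(3) by blast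
  then show ?thesis unfolding width_def using width_set_le_2[OF assms(1,2)] by (intro cSup_least) auto
qed

lemma less_width_obtain:
  assumes "P \<subseteq> rball d 1" "x \<in> rball d 1" "P \<noteq> {}" "c < width d P x"
  obtains a b where "a \<in> P" "b \<in> P" "c < ip d a x - ip d b x"
proof -
  have "bdd_above {ip d (\<lambda>i. a i - b i) x | a b. a \<in> P \<and> b \<in> P}"
    using width_set_le_2[OF assms(1,2)] by (intro bdd_aboveI[of _ 2]) auto
  moreover have "{ip d (\<lambda>i. a i - b i) x | a b. a \<in> P \<and> b \<in> P} \<noteq> {}"
    using assms(3) by blast
  ultimately show ?thesis
    using assms(4) that less_cSup_iff unfolding width_def ip_diff by (smt (verit) mem_Collect_eq)
qed

section \<open>Regret of the Steiner pricing rule\<close>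

lemma ln_steiner_ratio_le:
  fixes d k :: nat
  assumes d: "d \<ge> 1"
  defines "\<rho> \<equiv> (1/2)^k / (4 * real d)"
  shows "ln ((2 * (1 + \<rho>))^d / (2 * \<rho> / d)^d) \<le> real d * (3 + 2 * ln d + k)"
proof -
  have \<rho>: "\<rho> > 0" using d unfolding \<rho>_def by simp
  have "(2 * (1 + \<rho>)) / (2 * \<rho> / d) = real d / \<rho> + d"
    using \<rho> d by (simp add: field_simps)
  also have "real d / \<rho> = 4 * (real d)^2 * 2^k"
    unfolding \<rho>_def by (simp add: power2_eq_square power_one_over)
  finally have ratio: "ln ((2 * (1 + \<rho>))^d / (2 * \<rho> / d)^d) = d * ln (4 * (real d)^2 * 2^k + d)"
    by (simp add: power_divide[symmetric] ln_realpow)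
  have "real d \<le> (real d)^2 * 1" using d by (simp add: power2_eq_square)
  also have "\<dots> \<le> (real d)^2 * 2^k" by (intro mult_left_mono) auto
  finally have "ln (4 * (real d)^2 * 2^k + d) \<le> ln (5 * (real d)^2 * 2^k)"
    using d by (subst ln_le_cancel_iff) (auto simp: mult.commute)
  also have "\<dots> = ln 5 + 2 * ln d + k * ln 2"
    using d by (simp add: ln_mult ln_realpow)
  also have "\<dots> \<le> 3 + 2 * ln d + k"
  proof -
    have "ln (5::real) \<le> ln (2^3)" by simp
    also have "\<dots> = 3 * ln 2" using ln_realpow[of 2 3] by simp
    finally have "ln (5::real) \<le> 3 * ln 2" .
    moreover have "k * ln 2 \<le> k" using ln_2_less_1 by (simp add: mult_left_le)
    ultimately show ?thesis using ln_2_less_1 by linarith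
  qed
  finally show ?thesis unfolding ratio using d by (simp add: mult_left_mono)
qed

lemma sum_half_powers_le: "(\<Sum>k<K. (1/2::real)^k) \<le> 2"
  by (simp add: sum_gp_strict)

lemma sum_index_half_powers_le: "(\<Sum>k<K. real k * (1/2::real)^k) \<le> 2"
proof -
  have "(\<Sum>k<K. real k * (1/2::real)^k) = 2 - 2 * (real K + 1) * (1/2)^K"
  proof (induction K)
    case (Suc K)
    then have "(\<Sum>k<Suc K. real k * (1/2::real)^k) = 2 - 2 * (real K + 1) * (1/2)^K + real K * (1/2)^K"
      by simp
    also have "\<dots> = 2 - 2 * (real (Suc K) + 1) * (1/2)^(Suc K)" by (simp add: algebra_simps)
    finally show ?case .
  qed simp
  then show ?thesis by simp
qed

lemma sum_half_powers_affine_le: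
  assumes "0 \<le> a"
  shows "(\<Sum>k<K. (1/2::real)^k * (a + real k)) \<le> 2 * a + 2"
proof -
  have "(\<Sum>k<K. (1/2::real)^k * (a + real k)) = a * (\<Sum>k<K. (1/2)^k) + (\<Sum>k<K. real k * (1/2)^k)"
    by (simp add: algebra_simps sum.distrib sum_distrib_left)
  also have "\<dots> \<le> a * 2 + 2"
    using assms sum_half_powers_le sum_index_half_powers_le by (intro add_mono mult_left_mono) auto
  finally show ?thesis by simp
qed

lemma sum_le_potential_drop:
  fixes r :: "nat \<Rightarrow> real" and pot :: "nat \<Rightarrow> nat \<Rightarrow> real"
  assumes nonneg: "\<And>k t. 0 \<le> pot k t" and mono: "\<And>k t. pot k (Suc t) \<le> pot k t"
    and charge: "\<And>t. t < T \<Longrightarrow> r t \<le> pot (\<kappa> t) t - pot (\<kappa> t) (Suc t)"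
    and initial: "\<And>K. (\<Sum>k<K. pot k 0) \<le> B"
  shows "(\<Sum>t<T. r t) \<le> B"
proof -
  define K where "K = Suc (\<Sum>t<T. \<kappa> t)"
  have "\<kappa> t < K" if "t < T" for t
    using that member_le_sum[of t "{..<T}" \<kappa>] unfolding K_def by auto
  then have "r t \<le> (\<Sum>k<K. pot k t - pot k (Suc t))" if "t < T" for t
    using charge[OF that] that mono
    by (intro order_trans[OF _ member_le_sum[of "\<kappa> t"]]) (auto simp: algebra_simps)
  then have "(\<Sum>t<T. r t) \<le> (\<Sum>t<T. \<Sum>k<K. pot k t - pot k (Suc t))"
    by (intro sum_mono) auto
  also have "\<dots> = (\<Sum>k<K. pot k 0 - pot k T)"
    by (subst sum.swap) (simp add: sum_lessThan_telescope')
  also have "\<dots> \<le> (\<Sum>k<K. pot k 0)"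
    using nonneg by (intro sum_mono) auto
  also have "\<dots> \<le> B" by (rule initial)
  finally show ?thesis .
qed

lemma round_regret_eq: "round_regret c v y = (if (c \<le> y) = (y \<le> v) then 0 else max (v - c) 0)"
  unfolding round_regret_def by auto

lemma knowledge_Suc_subset: "knowledge d ths thb x y (Suc t) \<subseteq> knowledge d ths thb x y t"
  by (auto simp: Let_def)

lemma knowledge_subset_rball: "knowledge d ths thb x y t \<subseteq> rball d 1"
proof (induction t)
  case (Suc t)
  then show ?case using knowledge_Suc_subset by blast
qed simp

lemma mem_knowledge:
  assumes "ths \<in> rball d 1" "thb \<in> rball d 1"
  shows "ths \<in> knowledge d ths thb x y t" "thb \<in> knowledge d ths thb x y t"
  by (induction t) (use assms in \<open>auto simp: Let_def\<close>)

lemma rconvex_knowledge: "rconvex (knowledge d ths thb x y t)"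
  by (induction t) (simp_all add: Let_def rconvex_rball rconvex_halfspace_le rconvex_halfspace_ge)

lemma closed_knowledge: "closed (knowledge d ths thb x y t)"
  by (induction t) (simp_all add: Let_def closed_rball closed_halfspace_le closed_halfspace_ge)

lemma knowledge_Suc_cut:
  assumes "(ip d ths (x t) \<le> y t) \<noteq> (y t \<le> ip d thb (x t))"
  shows "knowledge d ths thb x y (Suc t) = {\<theta>\<in>knowledge d ths thb x y t. ip d \<theta> (x t) \<le> y t} \<or>
    knowledge d ths thb x y (Suc t) = {\<theta>\<in>knowledge d ths thb x y t. y t \<le> ip d \<theta> (x t)}"
  using assms by (auto simp: Let_def)

locale steiner_run =
  fixes d :: nat and ths thb :: "nat \<Rightarrow> real" and x :: "nat \<Rightarrow> nat \<Rightarrow> real" and y :: "nat \<Rightarrow> real"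
  assumes dim: "d \<ge> 1" and seller: "ths \<in> rball d 1" and buyer: "thb \<in> rball d 1"
    and contexts: "\<And>t. x t \<in> rball d 1" and prices: "steiner_prices d ths thb x y"
begin

abbreviation \<Phi> :: "nat \<Rightarrow> (nat \<Rightarrow> real) set" where
  "\<Phi> t \<equiv> knowledge d ths thb x y t"

definition radius :: "nat \<Rightarrow> real" where
  "radius k = (1/2)^k / (4 * real d)"

definition steiner_vol :: "nat \<Rightarrow> nat \<Rightarrow> real" where
  "steiner_vol k t = vol d (mink d (\<Phi> t) (radius k))"

definition inner_cube_vol :: "nat \<Rightarrow> real" where
  "inner_cube_vol k = (2 * radius k / d)^d"

text \<open>The weight \<open>12 * (1/2)^k\<close> turns the loss \<open>ln (6/5) \<ge> 1/6\<close> of a cut at scale \<open>k\<close>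
  into the cost \<open>2 * (1/2)^k\<close> of the round.\<close>

definition potential :: "nat \<Rightarrow> nat \<Rightarrow> real" where
  "potential k t = 12 * (1/2)^k * ln (steiner_vol k t / inner_cube_vol k)"

text \<open>Shifted by one against \<^const>\<open>scale\<close> to be a natural number: widths are at most 2,
  so \<^const>\<open>scale\<close> is at least \<open>-1\<close>.\<close>

definition round_scale :: "nat \<Rightarrow> nat" where
  "round_scale t = nat (scale (width d (\<Phi> t) (x t)) + 1)"

lemma radius_pos: "0 < radius k"
  using dim unfolding radius_def by simp

lemma steiner_vol_ge: "inner_cube_vol k \<le> steiner_vol k t"
  unfolding steiner_vol_def inner_cube_vol_def using radius_pos[of k]
  by (intro vol_mink_ge[OF dim mem_knowledge(1)[OF seller buyer] closed_knowledge knowledge_subset_rball])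
    simp

lemma inner_cube_vol_pos: "0 < inner_cube_vol k"
  using radius_pos[of k] dim unfolding inner_cube_vol_def by simp

lemma steiner_vol_pos: "0 < steiner_vol k t"
  using steiner_vol_ge[of k t] inner_cube_vol_pos[of k] by linarith

lemma potential_nonneg: "0 \<le> potential k t"
proof -
  have "1 \<le> steiner_vol k t / inner_cube_vol k"
    using steiner_vol_ge[of k t] inner_cube_vol_pos[of k] by simp
  then show ?thesis unfolding potential_def by simp
qed

lemma potential_Suc_le: "potential k (Suc t) \<le> potential k t"
proof -
  have "steiner_vol k (Suc t) \<le> steiner_vol k t"
    unfolding steiner_vol_def
    by (intro vol_mink_mono knowledge_Suc_subset closed_knowledge knowledge_subset_rball)
  then have "ln (steiner_vol k (Suc t) / inner_cube_vol k) \<le> ln (steiner_vol k t / inner_cube_vol k)"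
    using steiner_vol_pos[of k "Suc t"] inner_cube_vol_pos[of k] by (simp add: divide_right_mono)
  then show ?thesis unfolding potential_def by simp
qed

lemma knowledge_width_le_2: "width d (\<Phi> t) (x t) \<le> 2"
  using mem_knowledge(1)[OF seller buyer]
  by (intro width_le_2[OF knowledge_subset_rball contexts]) blast

lemma steiner_vol_cut:
  assumes mistake: "(ip d ths (x t) \<le> y t) \<noteq> (y t \<le> ip d thb (x t))"
    and w: "0 < width d (\<Phi> t) (x t)"
  defines "k \<equiv> round_scale t"
  shows "steiner_vol k (Suc t) \<le> 5/6 * steiner_vol k t"
proof -
  let ?w = "width d (\<Phi> t) (x t)"
  have k: "scale ?w = int k - 1" "(1/2)^k < ?w"
    using scale_index[OF w knowledge_width_le_2] unfolding k_def round_scale_def by auto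
  have "?w \<noteq> 0" using w by simp
  then have half: "vol d {\<theta>\<in>mink d (\<Phi> t) (radius k). y t \<le> ip d \<theta> (x t)} = vol d (mink d (\<Phi> t) (radius k)) / 2"
    using spec[OF prices[unfolded steiner_prices_def], of t]
    unfolding Let_def k(1) delta_index radius_def[symmetric] by simp
  have "\<Phi> t \<noteq> {}" using mem_knowledge(1)[OF seller buyer] by blast
  then obtain a b where ab: "a \<in> \<Phi> t" "b \<in> \<Phi> t" "(1/2)^k < ip d a (x t) - ip d b (x t)"
    by (rule less_width_obtain[OF knowledge_subset_rball contexts _ k(2)])
  moreover have "4 * real d * radius k = (1/2)^k" using dim unfolding radius_def by simp
  ultimately have wide: "4 * real d * radius k < ip d a (x t) - ip d b (x t)" by simp
  show ?thesis
    unfolding steiner_vol_def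
    by (rule vol_mink_halfspace_cut[OF dim rconvex_knowledge closed_knowledge knowledge_subset_rball
          contexts less_imp_le[OF radius_pos] ab(1,2) wide half knowledge_Suc_cut[of d ths x t y thb, OF mistake]])
qed

lemma potential_drop:
  assumes "(ip d ths (x t) \<le> y t) \<noteq> (y t \<le> ip d thb (x t))" "0 < width d (\<Phi> t) (x t)"
  defines "k \<equiv> round_scale t"
  shows "2 * (1/2)^k \<le> potential k t - potential k (Suc t)"
proof -
  define L where "L = inner_cube_vol k"
  have pos: "0 < L" "0 < steiner_vol k t" "0 < steiner_vol k (Suc t)"
    unfolding L_def by (simp_all add: inner_cube_vol_pos steiner_vol_pos)
  have "steiner_vol k (Suc t) / L \<le> 5/6 * (steiner_vol k t / L)"
    using steiner_vol_cut[OF assms(1,2)] pos(1) unfolding k_def by (simp add: field_simps)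
  then have "ln (steiner_vol k (Suc t) / L) \<le> ln (5/6 * (steiner_vol k t / L))"
    using pos by simp
  also have "\<dots> = ln (5/6) + ln (steiner_vol k t / L)"
    by (rule ln_mult_pos) (use pos in auto)
  also have "ln (5/6::real) \<le> - 1/6"
    using ln_le_minus_one[of "5/6::real"] by simp
  finally have "1/6 \<le> ln (steiner_vol k t / L) - ln (steiner_vol k (Suc t) / L)" by simp
  then have "12 * (1/2)^k * (1/6) \<le> 12 * (1/2)^k * (ln (steiner_vol k t / L) - ln (steiner_vol k (Suc t) / L))"
    by (intro mult_left_mono) auto
  then show ?thesis unfolding potential_def L_def by (simp add: right_diff_distrib)
qed

lemma round_regret_le_potential_drop:
  "round_regret (ip d ths (x t)) (ip d thb (x t)) (y t)
     \<le> potential (round_scale t) t - potential (round_scale t) (Suc t)"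
proof (cases "(ip d ths (x t) \<le> y t) = (y t \<le> ip d thb (x t))")
  case True
  then show ?thesis using potential_Suc_le by (simp add: round_regret_eq)
next
  case mistake: False
  let ?w = "width d (\<Phi> t) (x t)"
  have gap: "ip d thb (x t) - ip d ths (x t) \<le> ?w"
    using mem_knowledge[OF seller buyer] by (intro width_ge[OF knowledge_subset_rball contexts])
  show ?thesis
  proof (cases "0 < ?w")
    case True
    have "?w \<le> 2 * (1/2)^round_scale t"
      using scale_index(3)[OF True knowledge_width_le_2] unfolding round_scale_def .
    then show ?thesis
      using gap mistake potential_drop[OF mistake True] potential_Suc_le[of "round_scale t" t]
      by (simp add: round_regret_eq)
  next
    case False
    then show ?thesis
      using gap mistake potential_Suc_le[of "round_scale t" t] by (simp add: round_regret_eq)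
  qed
qed

lemma potential_initial_le: "potential k 0 \<le> 12 * real d * ((1/2)^k * (3 + 2 * ln d + k))"
proof -
  let ?L = "inner_cube_vol k"
  have "steiner_vol k 0 / ?L \<le> (2 * (1 + radius k))^d / ?L"
    unfolding steiner_vol_def using inner_cube_vol_pos[of k] radius_pos[of k]
    by (intro divide_right_mono vol_mink_le closed_knowledge knowledge_subset_rball) auto
  then have "ln (steiner_vol k 0 / ?L) \<le> ln ((2 * (1 + radius k))^d / ?L)"
    using steiner_vol_pos[of k 0] inner_cube_vol_pos[of k] by (intro ln_mono) auto
  also have "\<dots> \<le> real d * (3 + 2 * ln d + k)"
    unfolding inner_cube_vol_def radius_def by (rule ln_steiner_ratio_le[OF dim])
  finally have "12 * (1/2)^k * ln (steiner_vol k 0 / ?L) \<le> 12 * (1/2)^k * (real d * (3 + 2 * ln d + k))"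
    by (intro mult_left_mono) auto
  then show ?thesis unfolding potential_def by (simp only: mult_ac)
qed

theorem regret_bound: "cum_regret d ths thb x y T \<le> 96 * real d * (1 + ln d)"
  unfolding cum_regret_def
proof (rule sum_le_potential_drop[where pot = potential and \<kappa> = round_scale])
  show "0 \<le> potential k t" "potential k (Suc t) \<le> potential k t" for k t
    by (rule potential_nonneg, rule potential_Suc_le)
  show "round_regret (ip d ths (x t)) (ip d thb (x t)) (y t)
      \<le> potential (round_scale t) t - potential (round_scale t) (Suc t)" for t
    by (rule round_regret_le_potential_drop)
  fix K
  have "(\<Sum>k<K. potential k 0) \<le> 12 * real d * (\<Sum>k<K. (1/2)^k * ((3 + 2 * ln d) + k))"
    unfolding sum_distrib_left using potential_initial_le by (intro sum_mono) (simp add: add.assoc)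
  also have "\<dots> \<le> 12 * real d * (2 * (3 + 2 * ln d) + 2)"
    using dim by (intro mult_left_mono sum_half_powers_affine_le) auto
  also have "\<dots> \<le> 96 * real d * (1 + ln d)"
    using dim by (simp add: algebra_simps)
  finally show "(\<Sum>k<K. potential k 0) \<le> 96 * real d * (1 + ln d)" .
qed

end

theorem theorem5p3:
  "\<exists>C::real. \<forall>d::nat. \<forall>ths thb x y T.
     d \<ge> 1 \<longrightarrow> ths \<in> rball d 1 \<longrightarrow> thb \<in> rball d 1 \<longrightarrow>
     (\<forall>t. x t \<in> rball d 1) \<longrightarrow> steiner_prices d ths thb x y \<longrightarrow>
     cum_regret d ths thb x y T \<le> C * real d * (1 + ln (real d))"
  using steiner_run.regret_bound[OF steiner_run.intro] by blast

end
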